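(* Let $N\ge2$ and let $\mathcal F_{M,N}$ be the free $\Bbbk$-module on symbols $\bar M_0,\dots,\bar M_{N-1}$. For $l,m,k\ge0$ with $l+m+k+1=N$ put $Z_M^{l,m,k}:=\sum_{j=0}^m(-1)^j\binom mj\bar M_{l+j}$. For $0\le k\le\lfloor N/2\rfloor-1$ put $X_k:=Z_M^{k,k+1,N-2k-2}-Z_M^{k+1,k,N-2k-2}$, and for $j\ge0$, $s\ge1$ with $2j+s\le N-1$ put $X_j^{(s)}:=Z_M^{j,j+s,N-2j-s-1}-Z_M^{j+s,j,N-2j-s-1}$. Then: (i) $X_j^{(s)}=\sum_{k=0}^{\lfloor (s-1)/2\rfloor}(-1)^k\binom{s-k-1}{k}X_{j+k}$ for all such $j,s$; (ii) $X_0,\dots,X_{\lfloor N/2\rfloor-1}$ are $\Bbbk$-linearly independent in $\mathcal F_{M,N}$; (iii) the assignment $Z^{l,m,k}\mapsto$ (class of $Z_M^{l,m,k}$) extends to a well-defined isomorphism of $\Bbbk$-modules $\mathcal{ZF}_N\xrightarrow{\sim}\mathcal F_{M,N}/\langle X_0,\dots,X_{\lfloor N/2\rfloor-1}\rangle$.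
   Context: $\Bbbk$ is a commutative ring. $\mathcal F_N$ is the free $\Bbbk$-module on symbols $F^{l,m,k}$, $l,m,k\ge0$, $l+m+k+1=N$; $\mathcal{ZF}_N:=\mathcal F_N/I$ with $I$ generated by all $F^{l,m,k}-F^{m,l,k}$ and all $F^{l,m+1,k}+F^{l+1,m,k}-F^{l,m,k+1}$; $Z^{l,m,k}$ denotes the image of $F^{l,m,k}$. *)

theory Defs
  imports Main
begin

text \<open>Elements of the free module F_{M,N} on symbols M_0..M_{N-1} are represented as
  coordinate functions v :: nat => 'a vanishing at indices >= N.
  Elements of the free module F_N on symbols F^{l,m,k} (l+m+k+1 = N) are represented as
  coordinate functions on triples, vanishing outside the index set.\<close>

definition FM :: "nat \<Rightarrow> (nat \<Rightarrow> 'a::comm_ring_1) set" where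
  "FM N = {v. \<forall>i\<ge>N. v i = 0}"

definition basisM :: "nat \<Rightarrow> nat \<Rightarrow> 'a::comm_ring_1" where
  "basisM i = (\<lambda>x. if x = i then 1 else 0)"

definition ZM :: "nat \<Rightarrow> nat \<Rightarrow> nat \<Rightarrow> nat \<Rightarrow> 'a::comm_ring_1" where
  "ZM l m k = (\<lambda>x. \<Sum>j\<le>m. (-1)^j * of_nat (m choose j) * basisM (l + j) x)"

definition Xk :: "nat \<Rightarrow> nat \<Rightarrow> nat \<Rightarrow> 'a::comm_ring_1" where
  "Xk N k = (\<lambda>x. ZM k (k+1) (N - 2*k - 2) x - ZM (k+1) k (N - 2*k - 2) x)"

definition Xjs :: "nat \<Rightarrow> nat \<Rightarrow> nat \<Rightarrow> nat \<Rightarrow> 'a::comm_ring_1" where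
  "Xjs N j s = (\<lambda>x. ZM j (j+s) (N - 2*j - s - 1) x - ZM (j+s) j (N - 2*j - s - 1) x)"

definition spanX :: "nat \<Rightarrow> (nat \<Rightarrow> 'a::comm_ring_1) set" where
  "spanX N = {v. \<exists>c. v = (\<lambda>x. \<Sum>k<N div 2. c k * Xk N k x)}"

definition Tidx :: "nat \<Rightarrow> (nat \<times> nat \<times> nat) set" where
  "Tidx N = {(l,m,k). l + m + k + 1 = N}"

definition FF :: "nat \<Rightarrow> (nat \<times> nat \<times> nat \<Rightarrow> 'a::comm_ring_1) set" where
  "FF N = {a. \<forall>t. t \<notin> Tidx N \<longrightarrow> a t = 0}"

definition basisF :: "nat \<times> nat \<times> nat \<Rightarrow> nat \<times> nat \<times> nat \<Rightarrow> 'a::comm_ring_1" where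
  "basisF u = (\<lambda>t. if t = u then 1 else 0)"

definition Irel :: "nat \<Rightarrow> (nat \<times> nat \<times> nat \<Rightarrow> 'a::comm_ring_1) set" where
  "Irel N = {r. \<exists>a b. r = (\<lambda>t.
      (\<Sum>(l,m,k)\<in>Tidx N. a (l,m,k) * (basisF (l,m,k) t - basisF (m,l,k) t))
    + (\<Sum>(l,m,k)\<in>{(l,m,k). l + m + k + 2 = N}.
         b (l,m,k) * (basisF (l,m+1,k) t + basisF (l+1,m,k) t - basisF (l,m,k+1) t)))}"

definition phiZ :: "nat \<Rightarrow> (nat \<times> nat \<times> nat \<Rightarrow> 'a::comm_ring_1) \<Rightarrow> nat \<Rightarrow> 'a" where
  "phiZ N a = (\<lambda>x. \<Sum>(l,m,k)\<in>Tidx N. a (l,m,k) * ZM l m k x)"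

end

theory Submission
  imports Defs "HOL-Computational_Algebra.Polynomial"
begin

(*
  Read a coefficient function on {0..N-1} as a polynomial, M_i as x^i. Then Z_M^{l,m,k} is
  x^l (1 - x)^m and X_k is (x (1 - x))^k (1 - 2x). With a = 1 - x and b = x we have a + b = 1,
  hence a^s - b^s = (a - b) U_s(ab) for the Lucas sequence U_s(1, ab); expanding U_s gives (i).
  The lowest term of X_k is x^k, which gives (ii).

  For (iii), a relation F^{l,m,k} - F^{m,l,k} is mapped by (i) into the span of the X_k, and
  F^{l,m+1,k} + F^{l+1,m,k} - F^{l,m,k+1} is mapped to x^l (1 - x)^m (a + b - 1) = 0.
  Conversely, modulo the relations every F^{l,m,k} is a combination of the F^{i,N-1-i,0} with
  N div 2 <= i < N. Their images x^i (1 - x)^(N-1-i), together with X_0, ..., X_(N div 2 - 1),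
  form a unitriangular family of N polynomials, so no nonzero combination of the former lies in
  the span of the latter. Surjectivity holds because F^{l,0,N-1-l} is mapped to x^l.
*)

section \<open>Lucas sequences\<close>

fun lucas_U :: "nat \<Rightarrow> 'a::comm_ring_1 \<Rightarrow> 'a" where
  "lucas_U 0 q = 0"
| "lucas_U (Suc 0) q = 1"
| "lucas_U (Suc (Suc n)) q = lucas_U (Suc n) q - q * lucas_U n q"

lemma diff_power_eq_lucas_U:
  fixes a b :: "'a::comm_ring_1"
  assumes "a + b = 1"
  shows "a ^ n - b ^ n = (a - b) * lucas_U n (a * b)"
proof (induction n "a * b" rule: lucas_U.induct)
  case (3 n)
  have "a ^ Suc (Suc n) - b ^ Suc (Suc n)
      = (a + b) * (a ^ Suc n - b ^ Suc n) - a * b * (a ^ n - b ^ n)"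
    by (simp add: algebra_simps)
  also have "\<dots> = (a - b) * (lucas_U (Suc n) (a * b) - a * b * lucas_U n (a * b))"
    by (simp only: 3 assms) (simp add: algebra_simps)
  finally show ?case
    by simp
qed simp_all

lemma lucas_U_Suc_eq_sum:
  "lucas_U (Suc n) q = (\<Sum>k\<le>n. (-1) ^ k * of_nat ((n - k) choose k) * q ^ k)"
proof (induction n rule: induct_nat_012)
  case (ge2 n)
  define t where "t m k = (-1) ^ k * of_nat ((m - k) choose k) * q ^ k" for m k
  have pascal: "t (Suc (Suc n)) (Suc k) = t (Suc n) (Suc k) - q * t n k" if "k \<le> Suc n" for k
  proof (cases "k \<le> n")
    case True
    then have "Suc n - k = Suc (n - k)" by simp
    then show ?thesis by (simp add: t_def algebra_simps)
  next
    case False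
    with that have "k = Suc n" by simp
    then show ?thesis by (simp add: t_def)
  qed
  have "lucas_U (Suc (Suc (Suc n))) q = (\<Sum>k\<le>Suc n. t (Suc n) k) - q * (\<Sum>k\<le>n. t n k)"
    using ge2 by (simp add: t_def)
  also have "(\<Sum>k\<le>n. t n k) = (\<Sum>k\<le>Suc n. t n k)"
    by (simp add: t_def)
  also have "(\<Sum>k\<le>Suc n. t (Suc n) k) = 1 + (\<Sum>k\<le>Suc n. t (Suc n) (Suc k))"
    by (subst sum.atMost_Suc_shift) (simp add: t_def)
  also have "1 + (\<Sum>k\<le>Suc n. t (Suc n) (Suc k)) - q * (\<Sum>k\<le>Suc n. t n k)
      = 1 + (\<Sum>k\<le>Suc n. t (Suc (Suc n)) (Suc k))"
    by (simp add: pascal sum_subtractf sum_distrib_left del: sum.atMost_Suc)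
  also have "\<dots> = (\<Sum>k\<le>Suc (Suc n). t (Suc (Suc n)) k)"
    by (subst (2) sum.atMost_Suc_shift) (simp add: t_def)
  finally show ?case
    by (simp add: t_def)
qed simp_all

lemma lucas_U_Suc_eq_sum_half:
  "lucas_U (Suc n) q = (\<Sum>k\<le>n div 2. (-1) ^ k * of_nat ((n - k) choose k) * q ^ k)"
  unfolding lucas_U_Suc_eq_sum
proof (rule sum.mono_neutral_right)
  show "\<forall>k\<in>{..n} - {..n div 2}. (-1) ^ k * of_nat ((n - k) choose k) * q ^ k = 0"
  proof
    fix k assume "k \<in> {..n} - {..n div 2}"
    then have "n - k < k" by auto
    then show "(-1) ^ k * of_nat ((n - k) choose k) * q ^ k = 0" by (simp add: binomial_eq_0)
  qed
qed auto

section \<open>The generators as polynomial coefficients\<close>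

lemma coeff_one_minus_X_power:
  "coeff ([:1, -1:] ^ m :: 'a::comm_ring_1 poly) i = (-1) ^ i * of_nat (m choose i)"
proof (cases "i \<le> m")
  case True
  then show ?thesis by (simp add: coeff_linear_poly_power)
next
  case False
  then have "degree ([:1, -1:] ^ m :: 'a poly) < i"
    using degree_power_le[of "[:1, -1:] :: 'a poly" m] by simp
  with False show ?thesis by (simp add: coeff_eq_0 binomial_eq_0)
qed

lemma coeff_signed_of_nat_mult:
  "coeff ((-1) ^ k * of_nat c * p) x = (-1) ^ k * of_nat c * (coeff p x :: 'a::comm_ring_1)"
  by (induction k) (simp_all add: of_nat_mult_conv_smult)

lemma ZM_eq_coeff: "(ZM l m k :: nat \<Rightarrow> 'a::comm_ring_1) = coeff ([:0, 1:] ^ l * [:1, -1:] ^ m)"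
proof
  fix x
  have "(ZM l m k x :: 'a) = (\<Sum>j\<le>m. if j = x - l \<and> l \<le> x then (-1) ^ j * of_nat (m choose j) else 0)"
    unfolding ZM_def basisM_def by (rule sum.cong) auto
  also have "\<dots> = (if l \<le> x then (-1) ^ (x - l) * of_nat (m choose (x - l)) else 0)"
    by (auto simp: binomial_eq_0)
  also have "\<dots> = coeff ([:0, 1:] ^ l * [:1, -1:] ^ m) x"
    by (simp add: monom_altdef[of 1, simplified, symmetric] coeff_monom_mult coeff_one_minus_X_power)
  finally show "(ZM l m k x :: 'a) = coeff ([:0, 1:] ^ l * [:1, -1:] ^ m) x" .
qed

lemma Xk_eq_coeff:
  "(Xk N k :: nat \<Rightarrow> 'a::comm_ring_1) =
    coeff ([:0, 1:] ^ k * [:1, -1:] ^ (k + 1) - [:0, 1:] ^ (k + 1) * [:1, -1:] ^ k)"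
  by (simp add: fun_eq_iff Xk_def ZM_eq_coeff)

lemma Xjs_eq_coeff:
  "(Xjs N j s :: nat \<Rightarrow> 'a::comm_ring_1) =
    coeff ([:0, 1:] ^ j * [:1, -1:] ^ (j + s) - [:0, 1:] ^ (j + s) * [:1, -1:] ^ j)"
  by (simp add: fun_eq_iff Xjs_def ZM_eq_coeff)

lemma Xjs_eq_sum_Xk:
  assumes "1 \<le> s"
  shows "(Xjs N j s :: nat \<Rightarrow> 'a::comm_ring_1) =
    (\<lambda>x. \<Sum>k\<le>(s - 1) div 2. (-1) ^ k * of_nat ((s - k - 1) choose k) * Xk N (j + k) x)"
proof -
  obtain n where s: "s = Suc n"
    using assms by (cases s) auto
  define a :: "'a poly" where "a = [:1, -1:]"
  define b :: "'a poly" where "b = [:0, 1:]"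
  have "a + b = 1"
    by (simp add: a_def b_def one_pCons)
  have "b ^ j * a ^ (j + s) - b ^ (j + s) * a ^ j = (b * a) ^ j * (a ^ s - b ^ s)"
    by (simp add: power_add algebra_simps)
  also have "\<dots> = (b * a) ^ j * ((a - b) * lucas_U (Suc n) (a * b))"
    unfolding s diff_power_eq_lucas_U[OF \<open>a + b = 1\<close>] ..
  also have "\<dots> = (\<Sum>k\<le>n div 2. (-1) ^ k * of_nat ((n - k) choose k) *
      (b ^ (j + k) * a ^ (j + k + 1) - b ^ (j + k + 1) * a ^ (j + k)))"
    by (simp add: lucas_U_Suc_eq_sum_half sum_distrib_left power_add algebra_simps)
  finally show ?thesis
    unfolding Xjs_eq_coeff Xk_eq_coeff a_def[symmetric] b_def[symmetric]
    by (simp add: fun_eq_iff coeff_sum coeff_signed_of_nat_mult s)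
qed

lemma ZM_below: "x < l \<Longrightarrow> (ZM l m k x :: 'a::comm_ring_1) = 0"
  by (simp add: ZM_eq_coeff monom_altdef[of 1, simplified, symmetric] coeff_monom_mult)

lemma ZM_diag: "(ZM l m k l :: 'a::comm_ring_1) = 1"
  by (simp add: ZM_eq_coeff monom_altdef[of 1, simplified, symmetric] coeff_monom_mult
      coeff_one_minus_X_power)

lemma Xk_below: "x < k \<Longrightarrow> (Xk N k x :: 'a::comm_ring_1) = 0"
  by (simp add: Xk_def ZM_below)

lemma Xk_diag: "(Xk N k k :: 'a::comm_ring_1) = 1"
  by (simp add: Xk_def ZM_below ZM_diag)

lemma unitriangular_lin_comb_eq_0:
  fixes c :: "nat \<Rightarrow> 'a::semiring_1"
  assumes below: "\<And>i x. i < n \<Longrightarrow> x < i \<Longrightarrow> g i x = 0"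
    and diag: "\<And>i. i < n \<Longrightarrow> g i i = 1"
    and lin_comb: "\<And>x. (\<Sum>i<n. c i * g i x) = 0"
  shows "i < n \<Longrightarrow> c i = 0"
proof (induction i rule: less_induct)
  case (less j)
  have "(\<Sum>i\<in>{..<n} - {j}. c i * g i j) = 0"
  proof (rule sum.neutral, intro ballI)
    fix i assume "i \<in> {..<n} - {j}"
    then consider "i < j" | "j < i" "i < n" by force
    then show "c i * g i j = 0"
      by cases (use less.IH less.prems below in auto)
  qed
  then have "(\<Sum>i<n. c i * g i j) = c j * g j j"
    using less.prems by (simp add: sum.remove)
  then show "c j = 0"
    using lin_comb diag less.prems by simp
qed

lemma Xk_lin_indep:
  fixes c :: "nat \<Rightarrow> 'a::comm_ring_1"
  assumes "(\<lambda>x. \<Sum>k<n. c k * Xk N k x) = (\<lambda>x. 0)" and "k < n"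
  shows "c k = 0"
  using unitriangular_lin_comb_eq_0[of n "Xk N" c] assms Xk_below Xk_diag by metis

section \<open>Spans of coefficient functions\<close>

definition lin_span :: "'i set \<Rightarrow> ('i \<Rightarrow> 'b \<Rightarrow> 'a::ring_1) \<Rightarrow> ('b \<Rightarrow> 'a) set" where
  "lin_span I g = {f. \<exists>c. f = (\<lambda>t. \<Sum>i\<in>I. c i * g i t)}"

lemma lin_spanI: "f = (\<lambda>t. \<Sum>i\<in>I. c i * g i t) \<Longrightarrow> f \<in> lin_span I g"
  unfolding lin_span_def mem_Collect_eq by (rule exI)

lemma lin_spanE:
  assumes "f \<in> lin_span I g"
  obtains c where "f = (\<lambda>t. \<Sum>i\<in>I. c i * g i t)"
  using assms unfolding lin_span_def by blast

lemma lin_span_zero: "(\<lambda>t. 0) \<in> lin_span I g"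
  by (rule lin_spanI[where c = "\<lambda>_. 0"]) simp

lemma lin_span_add:
  assumes "f \<in> lin_span I g" and "h \<in> lin_span I g"
  shows "(\<lambda>t. f t + h t) \<in> lin_span I g"
proof -
  obtain c where f: "f = (\<lambda>t. \<Sum>i\<in>I. c i * g i t)"
    using assms(1) by (rule lin_spanE)
  obtain d where h: "h = (\<lambda>t. \<Sum>i\<in>I. d i * g i t)"
    using assms(2) by (rule lin_spanE)
  show ?thesis
    by (rule lin_spanI[where c = "\<lambda>i. c i + d i"]) (simp add: f h sum.distrib distrib_right)
qed

lemma lin_span_scale:
  assumes "f \<in> lin_span I g"
  shows "(\<lambda>t. a * f t) \<in> lin_span I g"
proof -
  obtain c where f: "f = (\<lambda>t. \<Sum>i\<in>I. c i * g i t)"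
    using assms by (rule lin_spanE)
  show ?thesis
    by (rule lin_spanI[where c = "\<lambda>i. a * c i"]) (simp add: f sum_distrib_left mult.assoc)
qed

lemma lin_span_diff:
  assumes "f \<in> lin_span I g" and "h \<in> lin_span I g"
  shows "(\<lambda>t. f t - h t) \<in> lin_span I g"
  using lin_span_add[OF assms(1) lin_span_scale[OF assms(2), of "-1"]] by simp

lemma lin_span_lin_comb:
  assumes "\<And>j. j \<in> J \<Longrightarrow> f j \<in> lin_span I g"
  shows "(\<lambda>t. \<Sum>j\<in>J. a j * f j t) \<in> lin_span I g"
  using assms
proof (induction J rule: infinite_finite_induct)
  case (insert j J)
  have "(\<lambda>t. a j * f j t) \<in> lin_span I g"
    using insert.prems by (simp add: lin_span_scale)
  moreover have "(\<lambda>t. \<Sum>j\<in>J. a j * f j t) \<in> lin_span I g"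
    using insert by simp
  ultimately show ?case
    using lin_span_add insert.hyps by fastforce
qed (simp_all add: lin_span_zero)

lemma lin_span_base:
  assumes "finite I" and "i \<in> I"
  shows "g i \<in> lin_span I g"
proof -
  have "g i = (\<lambda>t. \<Sum>j\<in>I. (if j = i then 1 else 0) * g j t)"
    using assms by (simp add: if_distrib[of "\<lambda>c. c * _"] cong: if_cong)
  then show ?thesis
    by (rule lin_spanI)
qed

lemma lin_span_PlusE:
  assumes "f \<in> lin_span (I <+> J) (case_sum g h)" and "finite I" and "finite J"
  obtains f1 f2 where "f1 \<in> lin_span I g" and "f2 \<in> lin_span J h" and "f = (\<lambda>t. f1 t + f2 t)"
proof -
  obtain c where f: "f = (\<lambda>t. \<Sum>i\<in>I <+> J. c i * case_sum g h i t)"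
    using assms(1) by (rule lin_spanE)
  show thesis
  proof (rule that)
    show "(\<lambda>t. \<Sum>i\<in>I. c (Inl i) * g i t) \<in> lin_span I g"
      and "(\<lambda>t. \<Sum>j\<in>J. c (Inr j) * h j t) \<in> lin_span J h"
      by (rule lin_spanI, rule refl)+
    show "f = (\<lambda>t. (\<Sum>i\<in>I. c (Inl i) * g i t) + (\<Sum>j\<in>J. c (Inr j) * h j t))"
      using assms(2,3) by (simp add: f sum.Plus comp_def)
  qed
qed

section \<open>Images of the relations\<close>

lemma spanX_eq_lin_span: "spanX N = lin_span {..<N div 2} (Xk N)"
  by (simp add: spanX_def lin_span_def)

lemma Xjs_in_spanX:
  assumes "1 \<le> s" and "2 * j + s < N"
  shows "(Xjs N j s :: nat \<Rightarrow> 'a::comm_ring_1) \<in> spanX N"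
  unfolding Xjs_eq_sum_Xk[OF assms(1)] spanX_eq_lin_span
proof (rule lin_span_lin_comb, rule lin_span_base)
  fix k assume "k \<in> {..(s - 1) div 2}"
  with assms show "j + k \<in> {..<N div 2}" by auto
qed simp

lemma ZM_swap_in_spanX:
  assumes "l + m < N"
  shows "(\<lambda>x. ZM l m k x - ZM m l k x :: 'a::comm_ring_1) \<in> spanX N"
proof -
  have swap: "(\<lambda>x. ZM l m k x - ZM m l k x :: 'a) \<in> spanX N" if "l < m" "l + m < N" for l m
  proof -
    have "(\<lambda>x. ZM l m k x - ZM m l k x :: 'a) = Xjs N l (m - l)"
      using that by (simp add: fun_eq_iff Xjs_def ZM_def)
    moreover have "1 \<le> m - l" and "2 * l + (m - l) < N"
      using that by auto
    ultimately show ?thesis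
      using Xjs_in_spanX by metis
  qed
  consider "l < m" | "l = m" | "m < l"
    by linarith
  then show ?thesis
  proof cases
    case 1
    with assms show ?thesis
      by (intro swap)
  next
    case 2
    then show ?thesis
      by (simp add: spanX_eq_lin_span lin_span_zero)
  next
    case 3
    with assms have "(\<lambda>x. ZM m l k x - ZM l m k x :: 'a) \<in> spanX N"
      by (intro swap) simp_all
    then have "(\<lambda>x. -1 * (ZM m l k x - ZM l m k x) :: 'a) \<in> spanX N"
      unfolding spanX_eq_lin_span by (rule lin_span_scale)
    then show ?thesis
      by simp
  qed
qed

lemma ZM_pascal:
  "(\<lambda>x. ZM l (m + 1) k x + ZM (l + 1) m k x) = (ZM l m k' :: nat \<Rightarrow> 'a::comm_ring_1)"
proof -
  define a :: "'a poly" where "a = [:1, -1:]"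
  define b :: "'a poly" where "b = [:0, 1:]"
  have "a + b = 1"
    by (simp add: a_def b_def one_pCons)
  have "b ^ l * a ^ (m + 1) + b ^ (l + 1) * a ^ m = b ^ l * a ^ m * (a + b)"
    by (simp add: algebra_simps)
  also have "\<dots> = b ^ l * a ^ m"
    using \<open>a + b = 1\<close> by simp
  finally have "b ^ l * a ^ (m + 1) + b ^ (l + 1) * a ^ m = b ^ l * a ^ m" .
  then show ?thesis
    unfolding ZM_eq_coeff a_def[symmetric] b_def[symmetric] by (simp flip: coeff_add)
qed

definition swap_rel :: "nat \<times> nat \<times> nat \<Rightarrow> nat \<times> nat \<times> nat \<Rightarrow> 'a::comm_ring_1" where
  "swap_rel = (\<lambda>(l, m, k) t. basisF (l, m, k) t - basisF (m, l, k) t)"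

definition pascal_rel :: "nat \<times> nat \<times> nat \<Rightarrow> nat \<times> nat \<times> nat \<Rightarrow> 'a::comm_ring_1" where
  "pascal_rel = (\<lambda>(l, m, k) t. basisF (l, m + 1, k) t + basisF (l + 1, m, k) t - basisF (l, m, k + 1) t)"

definition pascal_index :: "nat \<Rightarrow> (nat \<times> nat \<times> nat) set" where
  "pascal_index N = {(l, m, k). l + m + k + 2 = N}"

lemma finite_Tidx: "finite (Tidx N)"
  by (rule finite_subset[of _ "{..N} \<times> {..N} \<times> {..N}"]) (auto simp: Tidx_def)

lemma finite_pascal_index: "finite (pascal_index N)"
  by (rule finite_subset[of _ "{..N} \<times> {..N} \<times> {..N}"]) (auto simp: pascal_index_def)

lemma Irel_eq_lin_span:
  "(Irel N :: (nat \<times> nat \<times> nat \<Rightarrow> 'a::comm_ring_1) set) = lin_span (Tidx N <+> pascal_index N) (case_sum swap_rel pascal_rel)"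
proof (intro set_eqI iffI)
  fix r :: "nat \<times> nat \<times> nat \<Rightarrow> 'a" assume "r \<in> Irel N"
  then obtain a b where r: "r = (\<lambda>t.
      (\<Sum>(l,m,k)\<in>Tidx N. a (l,m,k) * (basisF (l,m,k) t - basisF (m,l,k) t))
    + (\<Sum>(l,m,k)\<in>pascal_index N.
         b (l,m,k) * (basisF (l,m+1,k) t + basisF (l+1,m,k) t - basisF (l,m,k+1) t)))"
    unfolding Irel_def pascal_index_def by blast
  show "r \<in> lin_span (Tidx N <+> pascal_index N) (case_sum swap_rel pascal_rel)"
    by (rule lin_spanI[where c = "case_sum a b"])
      (simp add: r sum.Plus finite_Tidx finite_pascal_index comp_def swap_rel_def pascal_rel_def
        case_prod_unfold)
next
  fix r :: "nat \<times> nat \<times> nat \<Rightarrow> 'a" assume "r \<in> lin_span (Tidx N <+> pascal_index N) (case_sum swap_rel pascal_rel)"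
  then obtain c where r: "r = (\<lambda>t. \<Sum>i\<in>Tidx N <+> pascal_index N. c i * case_sum swap_rel pascal_rel i t)"
    by (rule lin_spanE)
  show "r \<in> Irel N"
    unfolding Irel_def pascal_index_def[symmetric]
    by (rule CollectI, rule exI[of _ "c \<circ> Inl"], rule exI[of _ "c \<circ> Inr"])
      (simp add: r sum.Plus finite_Tidx finite_pascal_index comp_def swap_rel_def pascal_rel_def
        case_prod_unfold)
qed

lemma phiZ_lin_comb:
  assumes "finite I"
  shows "phiZ N (\<lambda>t. \<Sum>i\<in>I. c i * g i t) = (\<lambda>x. \<Sum>i\<in>I. c i * phiZ N (g i) x)"
  by (simp add: phiZ_def fun_eq_iff case_prod_unfold sum_distrib_left sum_distrib_right
      sum.swap[of _ I] mult.assoc)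

lemma phiZ_add: "phiZ N (\<lambda>t. f t + g t) = (\<lambda>x. phiZ N f x + phiZ N g x)"
  by (simp add: phiZ_def fun_eq_iff case_prod_unfold sum.distrib distrib_right)

lemma phiZ_diff: "phiZ N (\<lambda>t. f t - g t) = (\<lambda>x. phiZ N f x - phiZ N g x)"
  by (simp add: phiZ_def fun_eq_iff case_prod_unfold sum_subtractf left_diff_distrib)

lemma phiZ_basisF:
  assumes "l + m + k + 1 = N"
  shows "phiZ N (basisF (l, m, k)) = ZM l m k"
proof
  fix x
  have "(l, m, k) \<in> Tidx N"
    using assms by (simp add: Tidx_def)
  have "phiZ N (basisF (l, m, k)) x = (\<Sum>t\<in>Tidx N. if t = (l, m, k) then ZM l m k x else 0)"
    unfolding phiZ_def basisF_def by (intro sum.cong refl) (auto split: if_splits)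
  also have "\<dots> = ZM l m k x"
    using \<open>(l, m, k) \<in> Tidx N\<close> by (simp add: finite_Tidx)
  finally show "phiZ N (basisF (l, m, k)) x = ZM l m k x" .
qed

lemma phiZ_swap_rel:
  assumes "u \<in> Tidx N"
  shows "phiZ N (swap_rel u) \<in> (spanX N :: (nat \<Rightarrow> 'a::comm_ring_1) set)"
proof -
  obtain l m k where u: "u = (l, m, k)" and N: "l + m + k + 1 = N"
    using assms by (cases u) (auto simp: Tidx_def)
  then have "phiZ N (swap_rel u) = (\<lambda>x. ZM l m k x - ZM m l k x :: 'a)"
    by (simp add: swap_rel_def phiZ_diff phiZ_basisF add.commute add.left_commute)
  also have "\<dots> \<in> spanX N"
    using N by (intro ZM_swap_in_spanX) simp
  finally show ?thesis .
qed

lemma phiZ_pascal_rel: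
  assumes "w \<in> pascal_index N"
  shows "phiZ N (pascal_rel w) = (\<lambda>x. 0 :: 'a::comm_ring_1)"
proof -
  obtain l m k where w: "w = (l, m, k)" and N: "l + m + k + 2 = N"
    using assms by (cases w) (auto simp: pascal_index_def)
  then have "phiZ N (pascal_rel w) = (\<lambda>x. ZM l (m + 1) k x + ZM (l + 1) m k x - ZM l m (k + 1) x :: 'a)"
    by (simp add: pascal_rel_def phiZ_diff phiZ_add phiZ_basisF)
  also have "\<dots> = (\<lambda>x. 0)"
    using ZM_pascal[of l m k "k + 1"] by (simp add: fun_eq_iff)
  finally show ?thesis .
qed

lemma phiZ_Irel:
  assumes "r \<in> Irel N"
  shows "phiZ N r \<in> (spanX N :: (nat \<Rightarrow> 'a::comm_ring_1) set)"
proof -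
  have fin: "finite (Tidx N <+> pascal_index N)"
    by (simp add: finite_Tidx finite_pascal_index)
  obtain c where "r = (\<lambda>t. \<Sum>i\<in>Tidx N <+> pascal_index N. c i * case_sum swap_rel pascal_rel i t)"
    using assms unfolding Irel_eq_lin_span by (rule lin_spanE)
  then have "phiZ N r = (\<lambda>x. \<Sum>i\<in>Tidx N <+> pascal_index N. c i * phiZ N (case_sum swap_rel pascal_rel i) x)"
    by (simp add: phiZ_lin_comb[OF fin])
  also have "\<dots> \<in> spanX N"
    unfolding spanX_eq_lin_span
  proof (rule lin_span_lin_comb)
    fix i assume "i \<in> Tidx N <+> pascal_index N"
    then show "phiZ N (case_sum swap_rel pascal_rel i) \<in> lin_span {..<N div 2} (Xk N)"
      by (auto simp: phiZ_swap_rel[unfolded spanX_eq_lin_span] phiZ_pascal_rel lin_span_zero)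
  qed
  finally show ?thesis .
qed

section \<open>Normal forms modulo the relations\<close>

definition normal_gen :: "nat \<Rightarrow> nat \<Rightarrow> nat \<times> nat \<times> nat \<Rightarrow> 'a::comm_ring_1" where
  "normal_gen N i = basisF (i, N - 1 - i, 0)"

definition Irel_plus_normal :: "nat \<Rightarrow> (nat \<times> nat \<times> nat \<Rightarrow> 'a::comm_ring_1) set" where
  "Irel_plus_normal N = lin_span ((Tidx N <+> pascal_index N) <+> {N div 2..<N})
     (case_sum (case_sum swap_rel pascal_rel) (normal_gen N))"

lemma Irel_plus_normal_base:
  assumes "i \<in> (Tidx N <+> pascal_index N) <+> {N div 2..<N}"
  shows "case_sum (case_sum swap_rel pascal_rel) (normal_gen N) i \<in>
    (Irel_plus_normal N :: (_ \<Rightarrow> 'a::comm_ring_1) set)"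
  unfolding Irel_plus_normal_def
  using assms by (intro lin_span_base) (simp_all add: finite_Tidx finite_pascal_index)

lemma basisF_in_Irel_plus_normal:
  "l + m + k + 1 = N \<Longrightarrow> (basisF (l, m, k) :: _ \<Rightarrow> 'a::comm_ring_1) \<in> Irel_plus_normal N"
proof (induction k arbitrary: l m)
  case 0
  consider "N div 2 \<le> l" | "l < N div 2" "N div 2 \<le> m" "m < N"
    using "0" by linarith
  then show ?case
  proof cases
    case 1
    moreover have "m = N - 1 - l" and "l < N"
      using "0" by auto
    ultimately show ?thesis
      using Irel_plus_normal_base[where N = N, OF InrI[of l]] by (simp add: normal_gen_def)
  next
    case 2
    have "N - 1 - m = l"
      using "0" by simp
    then have "(basisF (l, m, 0) :: _ \<Rightarrow> 'a) = (\<lambda>t. swap_rel (l, m, 0) t + normal_gen N m t)"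
      by (simp add: swap_rel_def normal_gen_def)
    moreover have "swap_rel (l, m, 0) \<in> (Irel_plus_normal N :: (_ \<Rightarrow> 'a) set)"
      using "0" Irel_plus_normal_base[where N = N, OF InlI[OF InlI[of "(l, m, 0)"]]] by (simp add: Tidx_def)
    moreover have "normal_gen N m \<in> (Irel_plus_normal N :: (_ \<Rightarrow> 'a) set)"
      using 2 Irel_plus_normal_base[where N = N, OF InrI[of m]] by simp
    ultimately show ?thesis
      unfolding Irel_plus_normal_def by (simp add: lin_span_add)
  qed
next
  case (Suc k)
  have "(basisF (l, m, Suc k) :: _ \<Rightarrow> 'a) =
      (\<lambda>t. basisF (l, m + 1, k) t + basisF (l + 1, m, k) t - pascal_rel (l, m, k) t)"
    by (simp add: pascal_rel_def fun_eq_iff)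
  moreover have "pascal_rel (l, m, k) \<in> (Irel_plus_normal N :: (_ \<Rightarrow> 'a) set)"
    using Suc.prems Irel_plus_normal_base[where N = N, OF InlI[OF InrI[of "(l, m, k)"]]]
    by (simp add: pascal_index_def)
  moreover have "basisF (l, m + 1, k) \<in> (Irel_plus_normal N :: (_ \<Rightarrow> 'a) set)"
    and "basisF (l + 1, m, k) \<in> (Irel_plus_normal N :: (_ \<Rightarrow> 'a) set)"
    using Suc.prems by (simp_all add: Suc.IH)
  ultimately show ?case
    unfolding Irel_plus_normal_def by (simp add: lin_span_add lin_span_diff)
qed

lemma FF_eq_sum_basisF:
  assumes "a \<in> FF N"
  shows "a = (\<lambda>t. \<Sum>u\<in>Tidx N. a u * basisF u t)"
proof
  fix t
  have "(\<Sum>u\<in>Tidx N. a u * basisF u t) = (if t \<in> Tidx N then a t else 0)"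
    by (simp add: basisF_def finite_Tidx if_distrib[of "\<lambda>c. _ * c"] cong: if_cong)
  also have "\<dots> = a t"
    using assms by (cases t) (simp add: FF_def)
  finally show "a t = (\<Sum>u\<in>Tidx N. a u * basisF u t)" ..
qed

lemma FF_decompose:
  assumes "a \<in> FF N"
  obtains r e where "r \<in> Irel N"
    and "a = (\<lambda>t. r t + (\<Sum>i\<in>{N div 2..<N}. e i * normal_gen N i t))"
proof -
  have "a \<in> Irel_plus_normal N"
  proof (subst FF_eq_sum_basisF[OF assms], unfold Irel_plus_normal_def, rule lin_span_lin_comb)
    fix u assume "u \<in> Tidx N"
    then show "basisF u \<in> lin_span ((Tidx N <+> pascal_index N) <+> {N div 2..<N})
        (case_sum (case_sum swap_rel pascal_rel) (normal_gen N))"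
      using basisF_in_Irel_plus_normal unfolding Irel_plus_normal_def by (auto simp: Tidx_def)
  qed
  then obtain r q where r: "r \<in> Irel N" and q: "q \<in> lin_span {N div 2..<N} (normal_gen N)"
    and a: "a = (\<lambda>t. r t + q t)"
    unfolding Irel_plus_normal_def Irel_eq_lin_span
    by (rule lin_span_PlusE) (simp_all add: finite_Tidx finite_pascal_index)
  from q obtain e where "q = (\<lambda>t. \<Sum>i\<in>{N div 2..<N}. e i * normal_gen N i t)"
    by (rule lin_spanE)
  with r a show thesis
    by (intro that) simp_all
qed

lemma normal_lin_comb_in_spanX_eq_0:
  fixes e :: "nat \<Rightarrow> 'a::comm_ring_1"
  assumes "phiZ N (\<lambda>t. \<Sum>i\<in>{N div 2..<N}. e i * normal_gen N i t) \<in> spanX N"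
    and "i \<in> {N div 2..<N}"
  shows "e i = 0"
proof -
  obtain c where "phiZ N (\<lambda>t. \<Sum>i\<in>{N div 2..<N}. e i * normal_gen N i t) =
      (\<lambda>x. \<Sum>k<N div 2. c k * Xk N k x)"
    using assms(1) unfolding spanX_eq_lin_span by (rule lin_spanE)
  moreover have "phiZ N (\<lambda>t. \<Sum>i\<in>{N div 2..<N}. e i * normal_gen N i t) =
      (\<lambda>x. \<Sum>i\<in>{N div 2..<N}. e i * ZM i (N - 1 - i) 0 x)"
    by (simp add: phiZ_lin_comb normal_gen_def phiZ_basisF)
  ultimately have cancel:
    "(\<Sum>k<N div 2. c k * Xk N k x) = (\<Sum>i\<in>{N div 2..<N}. e i * ZM i (N - 1 - i) 0 x)" for x
    by metis
  define g :: "nat \<Rightarrow> nat \<Rightarrow> 'a" where "g i = (if i < N div 2 then Xk N i else ZM i (N - 1 - i) 0)" for i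
  define f where "f i = (if i < N div 2 then c i else - e i)" for i
  have "(\<Sum>i<N. f i * g i x) = 0" for x
  proof -
    have "(\<Sum>i<N. f i * g i x) = (\<Sum>i<N div 2. f i * g i x) + (\<Sum>i\<in>{N div 2..<N}. f i * g i x)"
      by (simp add: lessThan_atLeast0 sum.atLeastLessThan_concat)
    also have "\<dots> = (\<Sum>k<N div 2. c k * Xk N k x) - (\<Sum>i\<in>{N div 2..<N}. e i * ZM i (N - 1 - i) 0 x)"
      by (simp add: f_def g_def sum_negf)
    finally show ?thesis
      by (simp add: cancel)
  qed
  then have "f i = 0"
    using assms(2) by (intro unitriangular_lin_comb_eq_0[of N g f])
      (auto simp: g_def Xk_below Xk_diag ZM_below ZM_diag)
  with assms(2) show ?thesis
    by (simp add: f_def)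
qed

lemma phiZ_in_spanX_iff:
  assumes "a \<in> (FF N :: (nat \<times> nat \<times> nat \<Rightarrow> 'a::comm_ring_1) set)"
  shows "phiZ N a \<in> spanX N \<longleftrightarrow> a \<in> Irel N"
proof
  assume "phiZ N a \<in> spanX N"
  obtain r e where r: "r \<in> Irel N"
    and a: "a = (\<lambda>t. r t + (\<Sum>i\<in>{N div 2..<N}. e i * normal_gen N i t))"
    using assms by (rule FF_decompose)
  have "phiZ N (\<lambda>t. \<Sum>i\<in>{N div 2..<N}. e i * normal_gen N i t) =
      (\<lambda>x. phiZ N a x - phiZ N r x)"
    by (simp add: a phiZ_add)
  also have "\<dots> \<in> spanX N"
    using \<open>phiZ N a \<in> spanX N\<close> phiZ_Irel[OF r]
    unfolding spanX_eq_lin_span by (rule lin_span_diff)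
  finally have "\<forall>i\<in>{N div 2..<N}. e i = 0"
    using normal_lin_comb_in_spanX_eq_0 by blast
  then show "a \<in> Irel N"
    using r by (simp add: a)
qed (rule phiZ_Irel)

lemma phiZ_surj:
  assumes "v \<in> (FM N :: (nat \<Rightarrow> 'a::comm_ring_1) set)"
  shows "\<exists>a\<in>FF N. phiZ N a = v"
proof
  define a :: "nat \<times> nat \<times> nat \<Rightarrow> 'a" where "a = (\<lambda>t. \<Sum>l<N. v l * basisF (l, 0, N - 1 - l) t)"
  show "a \<in> FF N"
    unfolding FF_def a_def by (auto simp: Tidx_def basisF_def intro!: sum.neutral)
  have ZM_0: "ZM l 0 k x = basisM l x" for l k x
    by (simp add: ZM_def)
  have "phiZ N a = (\<lambda>x. \<Sum>l<N. v l * basisM l x)"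
    by (simp add: a_def phiZ_lin_comb phiZ_basisF ZM_0)
  also have "\<dots> = v"
    using assms by (auto simp: fun_eq_iff basisM_def FM_def if_distrib[of "\<lambda>c. _ * c"] cong: if_cong)
  finally show "phiZ N a = v" .
qed

theorem mainTheorem7:
  fixes N :: nat
  assumes "N \<ge> 2"
  shows
    "(\<forall>j s. 1 \<le> s \<longrightarrow> 2*j + s \<le> N - 1 \<longrightarrow>
        (Xjs N j s :: nat \<Rightarrow> 'a::comm_ring_1) =
        (\<lambda>x. \<Sum>k\<le>(s - 1) div 2. (-1)^k * of_nat ((s - k - 1) choose k) * Xk N (j + k) x))
   \<and> (\<forall>c :: nat \<Rightarrow> 'a. (\<lambda>x. \<Sum>k<N div 2. c k * Xk N k x) = (\<lambda>x. 0)
        \<longrightarrow> (\<forall>k<N div 2. c k = 0))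
   \<and> (\<forall>a \<in> (FF N :: (nat \<times> nat \<times> nat \<Rightarrow> 'a) set). phiZ N a \<in> spanX N \<longleftrightarrow> a \<in> Irel N)
   \<and> (\<forall>v \<in> (FM N :: (nat \<Rightarrow> 'a) set). \<exists>a \<in> FF N. (\<lambda>x. v x - phiZ N a x) \<in> spanX N)"
proof (intro conjI allI impI ballI)
  show "Xjs N j s = (\<lambda>x. \<Sum>k\<le>(s - 1) div 2. (-1)^k * of_nat ((s - k - 1) choose k) * Xk N (j + k) x)"
    if "1 \<le> s" for j s
    using that by (rule Xjs_eq_sum_Xk)
  show "c k = 0" if "(\<lambda>x. \<Sum>k<N div 2. c k * Xk N k x) = (\<lambda>x. 0)" and "k < N div 2"
    for c :: "nat \<Rightarrow> 'a" and k
    using that by (rule Xk_lin_indep)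
  show "phiZ N a \<in> spanX N \<longleftrightarrow> a \<in> Irel N" if "a \<in> FF N" for a :: "nat \<times> nat \<times> nat \<Rightarrow> 'a"
    using that by (rule phiZ_in_spanX_iff)
  show "\<exists>a\<in>FF N. (\<lambda>x. v x - phiZ N a x) \<in> spanX N" if v: "v \<in> FM N" for v :: "nat \<Rightarrow> 'a"
  proof -
    obtain a where "a \<in> FF N" and "phiZ N a = v"
      using phiZ_surj[OF v] ..
    moreover have "(\<lambda>x. 0) \<in> (spanX N :: (nat \<Rightarrow> 'a) set)"
      unfolding spanX_eq_lin_span by (rule lin_span_zero)
    ultimately show ?thesis
      by (intro bexI[of _ a]) simp_all
  qed
qed

end
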